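(* Let $A$ be a quasi-quantale. Then the set $NI(A)$ of idiomatic nuclei on $A$, ordered pointwise ($f\leq g$ iff $f(a)\leq g(a)$ for all $a\in A$), is a frame.
   Context: A quasi-quantale is a complete lattice $A$ equipped with an associative binary operation $(a,b)\mapsto ab$ such that for every directed subset $X\subseteq A$ (non-empty, and any two elements of $X$ have an upper bound in $X$) and every $a\in A$: $(\bigvee X)a=\bigvee\{xa\mid x\in X\}$ and $a(\bigvee X)=\bigvee\{ax\mid x\in X\}$. An inflator on $A$ is a monotone map $p\colon A\to A$ with $a\leq p(a)$ for all $a$. An idiomatic pre-nucleus is an inflator $p$ such that $p(a)p(b)\leq p(ab)=p(a\wedge b)=p(a)\wedge p(b)$ for all $a,b\in A$; an idiomatic nucleus is an idiomatic pre-nucleus $p$ with $p\circ p=p$. A frame is a complete lattice satisfying $a\wedge\bigvee X=\bigvee\{a\wedge x\mid x\in X\}$ for all $a$ and all subsets $X$. *)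

theory Defs
  imports Main
begin

definition directed :: "'a::order set \<Rightarrow> bool" where
  "directed X \<longleftrightarrow> X \<noteq> {} \<and> (\<forall>x\<in>X. \<forall>y\<in>X. \<exists>z\<in>X. x \<le> z \<and> y \<le> z)"

definition quasi_quantale :: "('a::complete_lattice \<Rightarrow> 'a \<Rightarrow> 'a) \<Rightarrow> bool" where
  "quasi_quantale m \<longleftrightarrow>
     (\<forall>a b c. m (m a b) c = m a (m b c)) \<and>
     (\<forall>X a. directed X \<longrightarrow>
        m (Sup X) a = (SUP x\<in>X. m x a) \<and> m a (Sup X) = (SUP x\<in>X. m a x))"

definition inflator :: "('a::complete_lattice \<Rightarrow> 'a) \<Rightarrow> bool" where
  "inflator p \<longleftrightarrow> mono p \<and> (\<forall>a. a \<le> p a)"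

definition idiomatic_prenucleus ::
  "('a::complete_lattice \<Rightarrow> 'a \<Rightarrow> 'a) \<Rightarrow> ('a \<Rightarrow> 'a) \<Rightarrow> bool" where
  "idiomatic_prenucleus m p \<longleftrightarrow> inflator p \<and>
     (\<forall>a b. m (p a) (p b) \<le> p (m a b) \<and> p (m a b) = p (inf a b) \<and> p (inf a b) = inf (p a) (p b))"

definition idiomatic_nucleus ::
  "('a::complete_lattice \<Rightarrow> 'a \<Rightarrow> 'a) \<Rightarrow> ('a \<Rightarrow> 'a) \<Rightarrow> bool" where
  "idiomatic_nucleus m p \<longleftrightarrow> idiomatic_prenucleus m p \<and> p \<circ> p = p"

definition NI :: "('a::complete_lattice \<Rightarrow> 'a \<Rightarrow> 'a) \<Rightarrow> ('a \<Rightarrow> 'a) set" where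
  "NI m = {p. idiomatic_nucleus m p}"

definition is_lub_in :: "'b set \<Rightarrow> ('b \<Rightarrow> 'b \<Rightarrow> bool) \<Rightarrow> 'b set \<Rightarrow> 'b \<Rightarrow> bool" where
  "is_lub_in S le X u \<longleftrightarrow> u \<in> S \<and> (\<forall>x\<in>X. le x u) \<and>
     (\<forall>v\<in>S. (\<forall>x\<in>X. le x v) \<longrightarrow> le u v)"

definition is_glb_in :: "'b set \<Rightarrow> ('b \<Rightarrow> 'b \<Rightarrow> bool) \<Rightarrow> 'b set \<Rightarrow> 'b \<Rightarrow> bool" where
  "is_glb_in S le X u \<longleftrightarrow> u \<in> S \<and> (\<forall>x\<in>X. le u x) \<and>
     (\<forall>v\<in>S. (\<forall>x\<in>X. le v x) \<longrightarrow> le v u)"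

definition frame_on :: "'b set \<Rightarrow> ('b \<Rightarrow> 'b \<Rightarrow> bool) \<Rightarrow> bool" where
  "frame_on S le \<longleftrightarrow>
     (\<forall>x\<in>S. le x x) \<and>
     (\<forall>x\<in>S. \<forall>y\<in>S. le x y \<and> le y x \<longrightarrow> x = y) \<and>
     (\<forall>x\<in>S. \<forall>y\<in>S. \<forall>z\<in>S. le x y \<and> le y z \<longrightarrow> le x z) \<and>
     (\<forall>X\<subseteq>S. \<exists>u. is_lub_in S le X u) \<and>
     (\<forall>a\<in>S. \<forall>X\<subseteq>S. \<forall>u w. is_lub_in S le X u \<longrightarrow> is_glb_in S le {a, u} w \<longrightarrow>
        is_lub_in S le {m. \<exists>x\<in>X. is_glb_in S le {a, x} m} w)"

end

theory Submission
  imports Defs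
begin

text \<open>Idiomatic nuclei are closed under pointwise infima, so they form a complete lattice
inside the function lattice; binary meets are pointwise. The join of a non-empty family
\<open>X\<close> of nuclei sends \<open>a\<close> to the least element above \<open>a\<close> fixed by every member of \<open>X\<close>.
This map is reached from \<open>a\<close> by applying members of \<open>X\<close> and taking directed suprema, so
every property preserved by these two operations passes to it. Directed suprema are
controlled because the multiplication preserves them and, for a fixed point \<open>s\<close> of a
nucleus, \<open>t \<sqinter> y \<le> s\<close> is equivalent to \<open>t y \<le> s\<close>. This yields both that the map is a nucleus
and the frame law \<open>f \<sqinter> \<Squnion>X \<le> \<Squnion>{f \<sqinter> x | x \<in> X}\<close>.\<close>

lemma is_lub_in_unique:
  fixes S :: "'b::order set"
  assumes "is_lub_in S (\<le>) X u" and "is_lub_in S (\<le>) X u'"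
  shows "u = u'"
  using assms unfolding is_lub_in_def by (blast intro: order.antisym)

lemma is_lub_in_Inf_upper_bounds:
  fixes S :: "'b::complete_lattice set"
  assumes "\<And>F. F \<subseteq> S \<Longrightarrow> Inf F \<in> S"
  shows "is_lub_in S (\<le>) X (Inf {u\<in>S. \<forall>x\<in>X. x \<le> u})"
  unfolding is_lub_in_def using assms by (auto intro: Inf_greatest Inf_lower)

lemma is_glb_in_pair_iff:
  fixes S :: "'b::complete_lattice set"
  assumes "\<And>F. F \<subseteq> S \<Longrightarrow> Inf F \<in> S" and "a \<in> S" "b \<in> S"
  shows "is_glb_in S (\<le>) {a, b} w \<longleftrightarrow> w = inf a b"
proof -
  have "inf a b \<in> S" using assms(1)[of "{a, b}"] assms(2,3) by simp
  then show ?thesis unfolding is_glb_in_def by (auto intro: order.antisym)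
qed

lemma frame_on_Inf_closed:
  fixes S :: "'b::complete_lattice set"
  assumes Inf_closed: "\<And>F. F \<subseteq> S \<Longrightarrow> Inf F \<in> S"
    and distrib: "\<And>a X v. a \<in> S \<Longrightarrow> X \<subseteq> S \<Longrightarrow> v \<in> S \<Longrightarrow> (\<forall>x\<in>X. inf a x \<le> v) \<Longrightarrow>
       inf a (Inf {u\<in>S. \<forall>x\<in>X. x \<le> u}) \<le> v"
  shows "frame_on S (\<le>)"
  unfolding frame_on_def
proof (intro conjI ballI allI impI)
  fix X assume "X \<subseteq> S"
  show "\<exists>u. is_lub_in S (\<le>) X u" using is_lub_in_Inf_upper_bounds[OF Inf_closed] by blast
next
  fix a X u w assume a: "a \<in> S" and X: "X \<subseteq> S"
    and u: "is_lub_in S (\<le>) X u" and w: "is_glb_in S (\<le>) {a, u} w"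
  have u_eq: "u = Inf {u\<in>S. \<forall>x\<in>X. x \<le> u}"
    using is_lub_in_unique[OF u is_lub_in_Inf_upper_bounds[OF Inf_closed]] .
  have "u \<in> S" using u unfolding is_lub_in_def by blast
  then have w_eq: "w = inf a u" using is_glb_in_pair_iff[OF Inf_closed a] w by blast
  have meets: "{w'. \<exists>x\<in>X. is_glb_in S (\<le>) {a, x} w'} = inf a ` X"
    using is_glb_in_pair_iff[OF Inf_closed a] X by auto
  have "inf a u \<in> S" using Inf_closed[of "{a, u}"] a \<open>u \<in> S\<close> by simp
  moreover have "\<forall>x\<in>X. inf a x \<le> inf a u"
    using u unfolding is_lub_in_def by (auto intro: le_infI2)
  moreover have "inf a u \<le> v" if "v \<in> S" "\<forall>x\<in>X. inf a x \<le> v" for v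
    using distrib[OF a X that] u_eq by simp
  ultimately show "is_lub_in S (\<le>) {w'. \<exists>x\<in>X. is_glb_in S (\<le>) {a, x} w'} w"
    unfolding meets w_eq is_lub_in_def by blast
qed auto

lemma directed_pair: "(x::'a::order) \<le> y \<Longrightarrow> directed {x, y}"
  unfolding directed_def by auto

lemma directed_Chains:
  assumes "C \<in> Chains (relation_of (\<le>) A)" and "C \<noteq> {}"
  shows "directed C"
  using assms unfolding directed_def Chains_def relation_of_def by blast

lemma quasi_quantale_Sup_mult:
  "quasi_quantale m \<Longrightarrow> directed Y \<Longrightarrow> m (Sup Y) a = (SUP y\<in>Y. m y a)"
  unfolding quasi_quantale_def by blast

lemma quasi_quantale_mult_Sup:
  "quasi_quantale m \<Longrightarrow> directed Y \<Longrightarrow> m a (Sup Y) = (SUP y\<in>Y. m a y)"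
  unfolding quasi_quantale_def by blast

lemma quasi_quantale_mult_mono:
  assumes q: "quasi_quantale m" and "a \<le> a'" "b \<le> b'"
  shows "m a b \<le> m a' b'"
proof -
  have "m a b \<le> m a' b"
    using quasi_quantale_Sup_mult[OF q directed_pair[OF \<open>a \<le> a'\<close>], of b] \<open>a \<le> a'\<close>
    by (simp add: le_iff_sup)
  also have "\<dots> \<le> m a' b'"
    using quasi_quantale_mult_Sup[OF q directed_pair[OF \<open>b \<le> b'\<close>], of a'] \<open>b \<le> b'\<close>
    by (simp add: le_iff_sup)
  finally show ?thesis .
qed

lemma NI_I:
  assumes "mono p" "\<And>a. a \<le> p a" "\<And>a b. m (p a) (p b) \<le> p (m a b)"
    "\<And>a b. p (m a b) = p (inf a b)" "\<And>a b. p (inf a b) = inf (p a) (p b)" "\<And>a. p (p a) = p a"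
  shows "p \<in> NI m"
  using assms
  by (auto simp: NI_def idiomatic_nucleus_def idiomatic_prenucleus_def inflator_def fun_eq_iff)

lemma NI_D:
  assumes "p \<in> NI m"
  shows "inflator p" "mono p" "a \<le> p a" "m (p a) (p b) \<le> p (m a b)"
    "p (m a b) = p (inf a b)" "p (inf a b) = inf (p a) (p b)" "p (p a) = p a"
proof -
  have "inflator p"
    and "\<forall>a b. m (p a) (p b) \<le> p (m a b) \<and> p (m a b) = p (inf a b) \<and> p (inf a b) = inf (p a) (p b)"
    and idem: "p \<circ> p = p"
    using assms unfolding NI_def idiomatic_nucleus_def idiomatic_prenucleus_def mem_Collect_eq
    by blast+
  then show "inflator p" "mono p" "a \<le> p a" "m (p a) (p b) \<le> p (m a b)"
    "p (m a b) = p (inf a b)" "p (inf a b) = inf (p a) (p b)"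
    unfolding inflator_def by blast+
  show "p (p a) = p a" using idem by (metis comp_apply)
qed

lemma NI_fixed_inf_le_iff:
  assumes p: "p \<in> NI m" and s: "p s = s"
  shows "inf t y \<le> s \<longleftrightarrow> m t y \<le> s"
proof
  assume "inf t y \<le> s"
  have "m t y \<le> p (m t y)" by (rule NI_D(3)[OF p])
  also have "\<dots> = p (inf t y)" by (rule NI_D(5)[OF p])
  also have "\<dots> \<le> p s" using NI_D(2)[OF p] \<open>inf t y \<le> s\<close> by (rule monoD)
  finally show "m t y \<le> s" using s by simp
next
  assume "m t y \<le> s"
  have "inf t y \<le> p (inf t y)" by (rule NI_D(3)[OF p])
  also have "\<dots> = p (m t y)" by (rule NI_D(5)[OF p, symmetric])
  also have "\<dots> \<le> p s" using NI_D(2)[OF p] \<open>m t y \<le> s\<close> by (rule monoD)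
  finally show "inf t y \<le> s" using s by simp
qed

lemma NI_fixed_inf_Sup_le:
  assumes q: "quasi_quantale m" and p: "p \<in> NI m" and s: "p s = s"
    and Y: "directed Y" and le: "\<forall>y\<in>Y. inf t y \<le> s"
  shows "inf t (Sup Y) \<le> s"
proof -
  have "m t (Sup Y) \<le> s"
    using le NI_fixed_inf_le_iff[OF p s] quasi_quantale_mult_Sup[OF q Y] by (simp add: SUP_least)
  then show ?thesis using NI_fixed_inf_le_iff[OF p s] by blast
qed

lemma NI_Inf:
  assumes q: "quasi_quantale m" and F: "F \<subseteq> NI m"
  shows "Inf F \<in> NI m"
proof (rule NI_I)
  have f: "f \<in> NI m" if "f \<in> F" for f using F that by blast
  have infl: "a \<le> Inf F a" for a
    unfolding Inf_apply by (rule INF_greatest) (rule NI_D(3)[OF f])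
  show "\<And>a. a \<le> Inf F a" by (rule infl)
  show "mono (Inf F)"
  proof (rule monoI)
    fix a b :: 'a assume "a \<le> b"
    show "Inf F a \<le> Inf F b"
      unfolding Inf_apply
    proof (rule INF_superset_mono[OF order_refl])
      fix g assume "g \<in> F"
      show "g a \<le> g b" using NI_D(2)[OF f[OF \<open>g \<in> F\<close>]] \<open>a \<le> b\<close> by (rule monoD)
    qed
  qed
  show "Inf F (Inf F a) = Inf F a" for a
  proof (rule order.antisym)
    show "Inf F (Inf F a) \<le> Inf F a"
      unfolding Inf_apply
    proof (rule INF_greatest)
      fix g assume g: "g \<in> F"
      have "(INF f\<in>F. f (INF f\<in>F. f a)) \<le> g (INF f\<in>F. f a)" using g by (rule INF_lower)
      also have "\<dots> \<le> g (g a)" using NI_D(2)[OF f[OF g]] INF_lower[OF g] by (rule monoD)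
      finally show "(INF f\<in>F. f (INF f\<in>F. f a)) \<le> g a" unfolding NI_D(7)[OF f[OF g]] .
    qed
  qed (rule infl)
  show "Inf F (m a b) = Inf F (inf a b)" for a b
    unfolding Inf_apply by (rule INF_cong[OF refl NI_D(5)[OF f]])
  show "Inf F (inf a b) = inf (Inf F a) (Inf F b)" for a b
    unfolding Inf_apply INF_inf_distrib by (rule INF_cong[OF refl NI_D(6)[OF f]])
  show "m (Inf F a) (Inf F b) \<le> Inf F (m a b)" for a b
    unfolding Inf_apply
  proof (rule INF_greatest)
    fix g assume g: "g \<in> F"
    have "m (INF f\<in>F. f a) (INF f\<in>F. f b) \<le> m (g a) (g b)"
      using g by (intro quasi_quantale_mult_mono[OF q] INF_lower)
    also have "\<dots> \<le> g (m a b)" by (rule NI_D(4)[OF f[OF g]])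
    finally show "m (INF f\<in>F. f a) (INF f\<in>F. f b) \<le> g (m a b)" .
  qed
qed

definition fix_hull :: "('a::complete_lattice \<Rightarrow> 'a) set \<Rightarrow> 'a \<Rightarrow> 'a" where
  "fix_hull X a = Inf {t. a \<le> t \<and> (\<forall>x\<in>X. x t = t)}"

lemma fix_hull_least: "a \<le> t \<Longrightarrow> (\<And>x. x \<in> X \<Longrightarrow> x t = t) \<Longrightarrow> fix_hull X a \<le> t"
  unfolding fix_hull_def by (rule Inf_lower) blast

lemma fix_hull_upper: "a \<le> fix_hull X a"
  unfolding fix_hull_def by (rule Inf_greatest) blast

lemma fix_hull_fixed:
  assumes X: "\<forall>x\<in>X. inflator x" and x: "x \<in> X"
  shows "x (fix_hull X a) = fix_hull X a"
proof (rule order.antisym)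
  have x_mono: "mono x" and x_infl: "\<And>b. b \<le> x b" using X x unfolding inflator_def by blast+
  show "x (fix_hull X a) \<le> fix_hull X a"
    unfolding fix_hull_def
  proof (rule Inf_greatest)
    fix t assume t: "t \<in> {t. a \<le> t \<and> (\<forall>x\<in>X. x t = t)}"
    have "x (Inf {t. a \<le> t \<and> (\<forall>x\<in>X. x t = t)}) \<le> x t"
      using x_mono Inf_lower[OF t] by (rule monoD)
    also have "\<dots> = t" using t x by blast
    finally show "x (Inf {t. a \<le> t \<and> (\<forall>x\<in>X. x t = t)}) \<le> t" .
  qed
  show "fix_hull X a \<le> x (fix_hull X a)" by (rule x_infl)
qed

lemma fix_hull_member_le:
  assumes X: "\<forall>x\<in>X. inflator x" and x: "x \<in> X"
  shows "x a \<le> fix_hull X a"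
proof -
  have "x a \<le> x (fix_hull X a)"
    using X x fix_hull_upper unfolding inflator_def by (blast dest: monoD)
  then show ?thesis unfolding fix_hull_fixed[OF X x] .
qed

lemma mono_fix_hull:
  assumes X: "\<forall>x\<in>X. inflator x"
  shows "mono (fix_hull X)"
proof (rule monoI)
  fix a b :: 'a assume "a \<le> b"
  show "fix_hull X a \<le> fix_hull X b"
    using \<open>a \<le> b\<close> fix_hull_upper fix_hull_fixed[OF X] by (blast intro: fix_hull_least order_trans)
qed

lemma fix_hull_idem:
  assumes X: "\<forall>x\<in>X. inflator x"
  shows "fix_hull X (fix_hull X a) = fix_hull X a"
proof (rule order.antisym)
  show "fix_hull X (fix_hull X a) \<le> fix_hull X a"
    using fix_hull_fixed[OF X] by (blast intro: fix_hull_least)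
qed (rule fix_hull_upper)

text \<open>Closure induction: \<open>fix_hull X a\<close> is a maximal element, found by Zorn's lemma, of the part
of \<open>D\<close> between \<open>a\<close> and \<open>fix_hull X a\<close>; maximality forces it to be a common fixed point.\<close>

lemma fix_hull_induct:
  assumes X: "\<forall>x\<in>X. inflator x" and "a \<in> D"
    and closed: "\<And>x y. x \<in> X \<Longrightarrow> y \<in> D \<Longrightarrow> x y \<in> D"
    and Sup_closed: "\<And>Y. directed Y \<Longrightarrow> Y \<subseteq> D \<Longrightarrow> Sup Y \<in> D"
  shows "fix_hull X a \<in> D"
proof -
  define P where "P = {y \<in> D. a \<le> y \<and> y \<le> fix_hull X a}"
  have po: "partial_order_on P (relation_of (\<le>) P)"
    unfolding partial_order_on_def preorder_on_def refl_on_def trans_def antisym_def relation_of_def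
    by auto
  have "\<exists>u\<in>P. \<forall>c\<in>C. c \<le> u" if C: "C \<in> Chains (relation_of (\<le>) P)" for C
  proof (cases "C = {}")
    case True
    then show ?thesis using \<open>a \<in> D\<close> fix_hull_upper unfolding P_def by blast
  next
    case False
    then obtain c where "c \<in> C" by blast
    have CP: "C \<subseteq> P" using Chains_relation_of[OF C] .
    have "Sup C \<in> D" using Sup_closed[OF directed_Chains[OF C False]] CP unfolding P_def by blast
    moreover have "a \<le> Sup C" using \<open>c \<in> C\<close> CP unfolding P_def by (blast intro: Sup_upper2)
    moreover have "Sup C \<le> fix_hull X a" using CP unfolding P_def by (blast intro: Sup_least)
    ultimately show ?thesis unfolding P_def by (blast intro: Sup_upper)
  qed
  then obtain z where z: "z \<in> P" and z_max: "\<And>y. y \<in> P \<Longrightarrow> z \<le> y \<Longrightarrow> y = z"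
    using predicate_Zorn[OF po] by blast
  have "x z = z" if x: "x \<in> X" for x
  proof (rule z_max)
    have x_mono: "mono x" and x_infl: "\<And>b. b \<le> x b" using X x unfolding inflator_def by blast+
    have "x z \<le> x (fix_hull X a)" using x_mono z unfolding P_def by (blast dest: monoD)
    then show "x z \<in> P"
      using closed[OF x] x_infl[of z] z fix_hull_fixed[OF X x] unfolding P_def by auto
  qed (use X x in \<open>auto simp: inflator_def\<close>)
  then have "fix_hull X a \<le> z" using z unfolding P_def by (blast intro: fix_hull_least)
  then have "fix_hull X a = z" using z unfolding P_def by (blast intro: order.antisym)
  then show ?thesis using z unfolding P_def by blast
qed

lemma fix_hull_binary_le:
  fixes g :: "'a::complete_lattice \<Rightarrow> 'a \<Rightarrow> 'a"
  assumes X: "\<forall>x\<in>X. inflator x"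
    and g_mono: "\<And>u u' v v'. u \<le> u' \<Longrightarrow> v \<le> v' \<Longrightarrow> g u v \<le> g u' v'"
    and g_sub: "\<And>x u v. x \<in> X \<Longrightarrow> g (x u) (x v) \<le> x (g u v)"
    and Sup_left: "\<And>Y t. directed Y \<Longrightarrow> \<forall>y\<in>Y. g y t \<le> s \<Longrightarrow> g (Sup Y) t \<le> s"
    and Sup_right: "\<And>Y t. directed Y \<Longrightarrow> \<forall>y\<in>Y. g t y \<le> s \<Longrightarrow> g t (Sup Y) \<le> s"
    and s: "\<And>x. x \<in> X \<Longrightarrow> x s = s"
    and "g a b \<le> s"
  shows "g (fix_hull X a) (fix_hull X b) \<le> s"
proof -
  have x_mono: "mono x" and x_infl: "\<And>u. u \<le> x u" if "x \<in> X" for x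
    using X that unfolding inflator_def by blast+
  have x_le_s: "x u \<le> s" if "x \<in> X" "u \<le> s" for x u
    using monoD[OF x_mono[OF that(1)] that(2)] s[OF that(1)] by simp
  have "fix_hull X b \<in> {y. g a y \<le> s}"
  proof (rule fix_hull_induct[OF X])
    fix x y assume x: "x \<in> X" and "y \<in> {y. g a y \<le> s}"
    have "g a (x y) \<le> g (x a) (x y)" using g_mono x_infl[OF x] by blast
    also have "\<dots> \<le> x (g a y)" by (rule g_sub[OF x])
    also have "\<dots> \<le> s" using x_le_s x \<open>y \<in> {y. g a y \<le> s}\<close> by blast
    finally show "x y \<in> {y. g a y \<le> s}" by simp
  qed (use \<open>g a b \<le> s\<close> Sup_right in auto)
  then have "fix_hull X a \<in> {y. g y (fix_hull X b) \<le> s}"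
  proof (intro fix_hull_induct[OF X])
    fix x y assume x: "x \<in> X" and "y \<in> {y. g y (fix_hull X b) \<le> s}"
    have "g (x y) (fix_hull X b) = g (x y) (x (fix_hull X b))" by (simp add: fix_hull_fixed[OF X x])
    also have "\<dots> \<le> x (g y (fix_hull X b))" by (rule g_sub[OF x])
    also have "\<dots> \<le> s" using x_le_s x \<open>y \<in> {y. g y (fix_hull X b) \<le> s}\<close> by blast
    finally show "x y \<in> {y. g y (fix_hull X b) \<le> s}" by simp
  qed (use Sup_left in auto)
  then show ?thesis by simp
qed

lemma NI_fix_hull:
  assumes q: "quasi_quantale m" and X: "X \<subseteq> NI m" and "X \<noteq> {}"
  shows "fix_hull X \<in> NI m"
proof -
  obtain x0 where x0: "x0 \<in> X" using \<open>X \<noteq> {}\<close> by blast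
  have x: "x \<in> NI m" if "x \<in> X" for x using X that by blast
  have infl: "\<forall>x\<in>X. inflator x" using NI_D(1)[OF x] by blast
  have hull_fixed: "x0 (fix_hull X a) = fix_hull X a" for a by (rule fix_hull_fixed[OF infl x0])
  have hull_mult: "fix_hull X (m a b) = fix_hull X (inf a b)" for a b
  proof -
    have "m a b \<le> fix_hull X (inf a b)" "inf a b \<le> fix_hull X (m a b)"
      using NI_D(3,5)[OF x[OF x0]] fix_hull_member_le[OF infl x0] by (metis order_trans)+
    then show ?thesis using fix_hull_fixed[OF infl] by (blast intro: order.antisym fix_hull_least)
  qed
  have hull_inf: "fix_hull X (inf a b) = inf (fix_hull X a) (fix_hull X b)" for a b
  proof (rule order.antisym)
    show "fix_hull X (inf a b) \<le> inf (fix_hull X a) (fix_hull X b)"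
      using mono_fix_hull[OF infl] by (simp add: monoD)
    let ?s = "fix_hull X (inf a b)"
    have Sup_right: "inf t (Sup Y) \<le> ?s" if "directed Y" "\<forall>y\<in>Y. inf t y \<le> ?s" for Y t
      using NI_fixed_inf_Sup_le[OF q x[OF x0] hull_fixed that] .
    show "inf (fix_hull X a) (fix_hull X b) \<le> ?s"
    proof (rule fix_hull_binary_le[OF infl inf_mono])
      show "inf (x u) (x v) \<le> x (inf u v)" if "x \<in> X" for x u v
        using NI_D(6)[OF x[OF that]] by simp
      show "inf (Sup Y) t \<le> ?s" if "directed Y" "\<forall>y\<in>Y. inf y t \<le> ?s" for Y t
        using Sup_right[of Y t] that by (simp add: inf_commute)
      show "x ?s = ?s" if "x \<in> X" for x by (rule fix_hull_fixed[OF infl that])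
    qed (use Sup_right fix_hull_upper in auto)
  qed
  have hull_mult_le: "m (fix_hull X a) (fix_hull X b) \<le> fix_hull X (m a b)" for a b
  proof (rule fix_hull_binary_le[OF infl])
    let ?s = "fix_hull X (m a b)"
    show "m u v \<le> m u' v'" if "u \<le> u'" "v \<le> v'" for u u' v v'
      using quasi_quantale_mult_mono[OF q that] .
    show "m (x u) (x v) \<le> x (m u v)" if "x \<in> X" for x u v by (rule NI_D(4)[OF x[OF that]])
    show "m (Sup Y) t \<le> ?s" if "directed Y" "\<forall>y\<in>Y. m y t \<le> ?s" for Y t
      using that(2) by (simp add: quasi_quantale_Sup_mult[OF q that(1)] SUP_least)
    show "m t (Sup Y) \<le> ?s" if "directed Y" "\<forall>y\<in>Y. m t y \<le> ?s" for Y t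
      using that(2) by (simp add: quasi_quantale_mult_Sup[OF q that(1)] SUP_least)
    show "x ?s = ?s" if "x \<in> X" for x by (rule fix_hull_fixed[OF infl that])
  qed (rule fix_hull_upper)
  show ?thesis
    by (rule NI_I[OF mono_fix_hull[OF infl] fix_hull_upper hull_mult_le hull_mult hull_inf
        fix_hull_idem[OF infl]])
qed

text \<open>The invariant \<open>a \<le> y\<close> is what makes \<open>f\<close> collapse to \<open>f a\<close> along the closure induction.\<close>

lemma NI_inf_fix_hull_le:
  assumes q: "quasi_quantale m" and f: "f \<in> NI m" and v: "v \<in> NI m" and X: "X \<subseteq> NI m"
    and le: "\<And>x. x \<in> X \<Longrightarrow> inf f x \<le> v"
  shows "inf f (fix_hull X) \<le> v"
proof (rule le_funI)
  fix a
  have x: "x \<in> NI m" if "x \<in> X" for x using X that by blast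
  have infl: "\<forall>x\<in>X. inflator x" using NI_D(1)[OF x] by blast
  have "fix_hull X a \<in> {y. a \<le> y \<and> inf (f a) y \<le> v a}"
  proof (rule fix_hull_induct[OF infl])
    show "a \<in> {y. a \<le> y \<and> inf (f a) y \<le> v a}" using NI_D(3)[OF v] by (auto intro: le_infI2)
  next
    fix x y assume "x \<in> X" and y: "y \<in> {y. a \<le> y \<and> inf (f a) y \<le> v a}"
    let ?z = "inf (f a) y"
    have "f a \<le> f y" using NI_D(2)[OF f] y by (auto dest: monoD)
    then have "inf (f a) (x y) \<le> f ?z" by (simp add: NI_D(6,7)[OF f] le_infI1)
    moreover have "inf (f a) (x y) \<le> x ?z"
      using NI_D(3)[OF x[OF \<open>x \<in> X\<close>], of "f a"] by (simp add: NI_D(6)[OF x[OF \<open>x \<in> X\<close>]] le_infI1)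
    ultimately have "inf (f a) (x y) \<le> inf (f ?z) (x ?z)" by simp
    also have "\<dots> \<le> v ?z" using le[OF \<open>x \<in> X\<close>] by (simp add: le_fun_def)
    also have "\<dots> \<le> v (v a)" using NI_D(2)[OF v] y by (auto dest: monoD)
    finally show "x y \<in> {y. a \<le> y \<and> inf (f a) y \<le> v a}"
      using y NI_D(3)[OF x[OF \<open>x \<in> X\<close>], of y] NI_D(7)[OF v] by auto
  next
    fix Y assume "directed Y" and Y: "Y \<subseteq> {y. a \<le> y \<and> inf (f a) y \<le> v a}"
    then obtain y where "y \<in> Y" unfolding directed_def by blast
    then have "a \<le> Sup Y" using Y by (blast intro: Sup_upper2)
    moreover have "inf (f a) (Sup Y) \<le> v a"
      using NI_fixed_inf_Sup_le[OF q v NI_D(7)[OF v] \<open>directed Y\<close>] Y by blast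
    ultimately show "Sup Y \<in> {y. a \<le> y \<and> inf (f a) y \<le> v a}" by simp
  qed
  then show "inf f (fix_hull X) a \<le> v a" by simp
qed

lemma NI_inf_join_le:
  assumes q: "quasi_quantale m" and f: "f \<in> NI m" and v: "v \<in> NI m" and X: "X \<subseteq> NI m"
    and le: "\<forall>x\<in>X. inf f x \<le> v"
  shows "inf f (Inf {u \<in> NI m. \<forall>x\<in>X. x \<le> u}) \<le> v"
proof (cases "X = {}")
  case True
  then show ?thesis using v by (auto intro: le_infI2 Inf_lower)
next
  case False
  have "\<forall>x\<in>X. x \<le> fix_hull X"
    using X NI_D(1) by (blast intro: le_funI fix_hull_member_le)
  then have "Inf {u \<in> NI m. \<forall>x\<in>X. x \<le> u} \<le> fix_hull X"
    using NI_fix_hull[OF q X False] by (blast intro: Inf_lower)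
  then show ?thesis
    using NI_inf_fix_hull_le[OF q f v X] le by (meson inf_mono order_refl order_trans)
qed

theorem proposition3p13:
  fixes m :: "'a::complete_lattice \<Rightarrow> 'a \<Rightarrow> 'a"
  assumes "quasi_quantale m"
  shows "frame_on (NI m) (\<lambda>f g. \<forall>a. f a \<le> g a)"
proof -
  have "(\<lambda>f g. \<forall>a. f a \<le> g a) = ((\<le>) :: ('a \<Rightarrow> 'a) \<Rightarrow> _)"
    by (intro ext) (simp add: le_fun_def)
  moreover have "frame_on (NI m) (\<le>)"
    using frame_on_Inf_closed[OF NI_Inf[OF assms] NI_inf_join_le[OF assms]] by blast
  ultimately show ?thesis by simp
qed

end
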